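(* Let $k\ge 2$ be an integer and let $F$ be a $(k,2,k)$-pattern with $W^k(F)=W^{k-1}(F)=\cdots=W^{k-g(k)}(F)=0$. Then $F$ is homogeneous.
   Context: A $(k,2,k)$-pattern is a $k$-uniform hypergraph $F$ with a partition $V(F)=V_1\cup V_2$, $|V_1|=|V_2|=k$, such that whether $S\in\binom{V(F)}{k}$ is an edge depends only on $(|S\cap V_1|,|S\cap V_2|)$; $F$ is homogeneous if it is empty or complete. For a finite set $V$ with $|V|\ge 2k\ge 2r$ and $f\colon\binom{V}{k}\to\mathbb{R}$, \[ W^r(f)=\left(\mathbb{E}_{(a_1,b_1,\ldots,a_r,b_r)}\Big(\mathbb{E}_{R}\,(-1)^{|R\cap\{b_1,\ldots,b_r\}|}f(R)\Big)^2\right)^{1/2}, \] where $(a_1,b_1,\ldots,a_r,b_r)$ is a uniformly random sequence of $2r$ distinct elements of $V$, and $R$ is a uniformly random $k$-subset of $V$ with $|R\cap\{a_i,b_i\}|=1$ for each $i\in[r]$; $W^r(F)=W^r(\mathbf{1}_F)$ with $\mathbf{1}_F$ the edge indicator. $g(k)$ is the smallest integer $g\ge 0$ such that for each integer $m\in[2,k]$, the system $\sum_{0\le i\le r}(-1)^i\binom{r}{i}\alpha_i=0$ for $r=m-g,\ldots,m$, with $\vec\alpha=(\alpha_0,\ldots,\alpha_m)\in\{0,1\}^{m+1}$, has only the solutions $(0,\ldots,0)$ and $(1,\ldots,1)$. *)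

theory Defs
  imports Complex_Main
begin

definition avg :: "'b set \<Rightarrow> ('b \<Rightarrow> real) \<Rightarrow> real" where
  "avg A h = (\<Sum>x\<in>A. h x) / real (card A)"

text \<open>Sequences (a_1,b_1,...,a_r,b_r) of 2r distinct elements of V, encoded as lists
  with a_i = xs!(2i), b_i = xs!(2i+1) for i < r.\<close>
definition seqs :: "nat \<Rightarrow> 'a set \<Rightarrow> 'a list set" where
  "seqs r V = {xs. length xs = 2 * r \<and> distinct xs \<and> set xs \<subseteq> V}"

definition transversals :: "nat \<Rightarrow> nat \<Rightarrow> 'a set \<Rightarrow> 'a list \<Rightarrow> 'a set set" where
  "transversals r k V xs = {R. R \<subseteq> V \<and> card R = k \<and>
      (\<forall>i<r. card (R \<inter> {xs ! (2*i), xs ! (2*i+1)}) = 1)}"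

definition bset :: "nat \<Rightarrow> 'a list \<Rightarrow> 'a set" where
  "bset r xs = {xs ! (2*i+1) | i. i < r}"

definition W :: "nat \<Rightarrow> nat \<Rightarrow> 'a set \<Rightarrow> ('a set \<Rightarrow> real) \<Rightarrow> real" where
  "W r k V f = sqrt (avg (seqs r V) (\<lambda>xs.
      (avg (transversals r k V xs) (\<lambda>R. (-1) ^ card (R \<inter> bset r xs) * f R)) ^ 2))"

definition kset :: "nat \<Rightarrow> 'a set \<Rightarrow> 'a set set" where
  "kset k V = {S. S \<subseteq> V \<and> card S = k}"

definition is_pattern :: "nat \<Rightarrow> 'a set \<Rightarrow> 'a set \<Rightarrow> 'a set set \<Rightarrow> bool" where
  "is_pattern k V1 V2 E \<longleftrightarrow> finite V1 \<and> finite V2 \<and> V1 \<inter> V2 = {} \<and>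
     card V1 = k \<and> card V2 = k \<and> E \<subseteq> kset k (V1 \<union> V2) \<and>
     (\<forall>S\<in>kset k (V1 \<union> V2). \<forall>T\<in>kset k (V1 \<union> V2).
        card (S \<inter> V1) = card (T \<inter> V1) \<and> card (S \<inter> V2) = card (T \<inter> V2)
        \<longrightarrow> (S \<in> E \<longleftrightarrow> T \<in> E))"

definition homogeneous :: "nat \<Rightarrow> 'a set \<Rightarrow> 'a set set \<Rightarrow> bool" where
  "homogeneous k V E \<longleftrightarrow> E = {} \<or> E = kset k V"

definition indic :: "'a set set \<Rightarrow> 'a set \<Rightarrow> real" where
  "indic E S = (if S \<in> E then 1 else 0)"

text \<open>Entries alpha i for i > m are irrelevant (only r \<le> m occurs).
  For natural r the range m-g..m (truncated subtraction) agrees with the integer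
  range up to negative r, for which the equation is an empty sum and trivially holds.\<close>
definition gk :: "nat \<Rightarrow> nat" where
  "gk k = (LEAST g. \<forall>m\<in>{2..k}. \<forall>\<alpha>::nat \<Rightarrow> bool.
      (\<forall>r\<in>{m-g..m}. (\<Sum>i\<le>r. (-1::int) ^ i * int (r choose i) * (if \<alpha> i then 1 else 0)) = 0)
      \<longrightarrow> ((\<forall>i\<le>m. \<not> \<alpha> i) \<or> (\<forall>i\<le>m. \<alpha> i)))"

end

theory Submission
  imports Defs
begin

(* Let \<alpha> i say whether the k-sets meeting V1 in i vertices are edges, and \<beta> be its 0/1 indicator.
   Take a sequence with every a_i in V1 and every b_i in V2. A transversal R is then determined
   by the set I of indices with b_i \<in> R and by the (k-r)-set C of its vertices off the sequence,
   with |R \<inter> V1| = |C \<inter> V1| + r - |I| and sign (-1)^|I|. So the inner sum in W^r(F) is a sum of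
   r-th forward differences \<Delta>^r \<beta> (|C \<inter> V1|) with |C \<inter> V1| \<le> k - r, and W^r(F) = 0 forces
   \<Delta>^r \<beta> (0) = 0 whenever \<Delta>^r \<beta> is constant on [0, k-r]. For r = k this interval is a point;
   descending to r = k - g(k), the vanishing of \<Delta>^(r+1) \<beta> on [0, k-r-1] makes \<Delta>^r \<beta> constant
   on [0, k-r], hence zero there. Finally \<Delta>^r \<beta> (0) = \<plusminus>\<Sum>_i (-1)^i (r choose i) \<alpha>_i, so by the
   definition of g(k) the profile \<alpha> is constant on [0, k], i.e. F is homogeneous. *)

fun fwd_diff :: "(nat \<Rightarrow> real) \<Rightarrow> nat \<Rightarrow> nat \<Rightarrow> real" where
  "fwd_diff \<beta> 0 t = \<beta> t"
| "fwd_diff \<beta> (Suc r) t = fwd_diff \<beta> r (Suc t) - fwd_diff \<beta> r t"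

lemma fwd_diff_eq_sum_Pow:
  "fwd_diff \<beta> r t = (\<Sum>I\<in>Pow {..<r}. (-1) ^ card I * \<beta> (t + r - card I))"
proof (induction r arbitrary: t)
  case 0
  then show ?case by simp
next
  case (Suc r)
  let ?g = "\<lambda>I. (-1) ^ card I * \<beta> (t + Suc r - card I)"
  have "(\<Sum>I\<in>Pow {..<Suc r}. ?g I) = (\<Sum>I\<in>Pow {..<r}. ?g I) + (\<Sum>I\<in>insert r ` Pow {..<r}. ?g I)"
    unfolding lessThan_Suc Pow_insert by (rule sum.union_disjoint) auto
  also have "(\<Sum>I\<in>insert r ` Pow {..<r}. ?g I) = (\<Sum>I\<in>Pow {..<r}. ?g (insert r I))"
    by (rule sum.reindex_cong[where l = "insert r"]) (auto intro!: inj_onI)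
  also have "(\<Sum>I\<in>Pow {..<r}. ?g (insert r I)) = - fwd_diff \<beta> r t"
    unfolding Suc.IH sum_negf[symmetric]
  proof (rule sum.cong)
    fix I assume "I \<in> Pow {..<r}"
    then have "finite I" "r \<notin> I"
      by (auto intro: finite_subset)
    then show "?g (insert r I) = - ((-1) ^ card I * \<beta> (t + r - card I))"
      by simp
  qed simp
  finally show ?case
    by (simp add: Suc.IH)
qed

lemma sum_Pow_card_eq:
  fixes h :: "nat \<Rightarrow> 'b::comm_semiring_1"
  assumes "finite A"
  shows "(\<Sum>I\<in>Pow A. h (card I)) = (\<Sum>s\<le>card A. of_nat (card A choose s) * h s)"
proof -
  have "(\<Sum>I\<in>Pow A. h (card I)) = (\<Sum>s\<le>card A. \<Sum>I\<in>{I \<in> Pow A. card I = s}. h (card I))"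
    using assms by (intro sum.group[symmetric]) (auto intro: card_mono)
  also have "\<dots> = (\<Sum>s\<le>card A. of_nat (card A choose s) * h s)"
  proof (rule sum.cong)
    fix s
    have "{I \<in> Pow A. card I = s} = {I. I \<subseteq> A \<and> card I = s}"
      by auto
    then show "(\<Sum>I\<in>{I \<in> Pow A. card I = s}. h (card I)) = of_nat (card A choose s) * h s"
      using n_subsets[OF assms, of s] by simp
  qed simp
  finally show ?thesis .
qed

lemma fwd_diff_at_0:
  "fwd_diff \<beta> r 0 = (-1) ^ r * (\<Sum>i\<le>r. (-1) ^ i * real (r choose i) * \<beta> i)"
proof -
  have "fwd_diff \<beta> r 0 = (\<Sum>s\<le>r. real (r choose s) * ((-1) ^ s * \<beta> (r - s)))"
    using sum_Pow_card_eq[of "{..<r}" "\<lambda>s. (-1) ^ s * \<beta> (r - s)"]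
    by (simp add: fwd_diff_eq_sum_Pow)
  also have "\<dots> = (\<Sum>i\<le>r. real (r choose (r - i)) * ((-1) ^ (r - i) * \<beta> i))"
    by (rule sum.reindex_bij_witness[where i = "\<lambda>i. r - i" and j = "\<lambda>i. r - i"]) auto
  also have "\<dots> = (\<Sum>i\<le>r. (-1) ^ r * ((-1) ^ i * real (r choose i) * \<beta> i))"
    by (rule sum.cong) (auto simp: binomial_symmetric[symmetric] power_diff_conv_inverse)
  finally show ?thesis
    by (simp add: sum_distrib_left)
qed

lemma fwd_diff_const_if_fwd_diff_Suc_zero:
  assumes "\<forall>t<m. fwd_diff \<beta> (Suc r) t = 0" and "t \<le> m"
  shows "fwd_diff \<beta> r t = fwd_diff \<beta> r 0"
  using assms(2) by (induction t) (use assms(1) in auto)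

lemma fwd_diff_vanishing_downward:
  assumes "r \<le> k"
    and vanish: "\<And>n. r \<le> n \<Longrightarrow> n \<le> k \<Longrightarrow>
      (\<forall>t\<le>k - n. fwd_diff \<beta> n t = fwd_diff \<beta> n 0) \<Longrightarrow> fwd_diff \<beta> n 0 = 0"
  shows "\<forall>t\<le>k - r. fwd_diff \<beta> r t = 0"
  using assms(1)
proof (induction rule: inc_induct)
  case base
  then show ?case
    using vanish[of k] assms(1) by simp
next
  case (step n)
  then have const: "\<forall>t\<le>k - n. fwd_diff \<beta> n t = fwd_diff \<beta> n 0"
    by (auto intro: fwd_diff_const_if_fwd_diff_Suc_zero[of "k - n"])
  moreover have "fwd_diff \<beta> n 0 = 0"
    using vanish[OF _ _ const] step.hyps by simp
  ultimately show ?case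
    by metis
qed

lemma alternating_binomial_system_triangular:
  fixes x :: "nat \<Rightarrow> int"
  assumes "\<forall>r\<le>m. (\<Sum>i\<le>r. (-1) ^ i * int (r choose i) * x i) = 0"
  shows "i \<le> m \<Longrightarrow> x i = 0"
proof (induction i rule: less_induct)
  case (less i)
  then have "(\<Sum>j<i. (-1) ^ j * int (i choose j) * x j) = 0"
    by (intro sum.neutral) auto
  moreover have "(\<Sum>j\<le>i. (-1) ^ j * int (i choose j) * x j) = 0"
    using assms less.prems by simp
  ultimately show "x i = 0"
    by (simp add: lessThan_Suc_atMost[symmetric])
qed

lemma gk_spec:
  assumes "k \<ge> 2"
    and "\<forall>r\<in>{k - gk k..k}. (\<Sum>i\<le>r. (-1::int) ^ i * int (r choose i) * (if \<alpha> i then 1 else 0)) = 0"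
  shows "(\<forall>i\<le>k. \<not> \<alpha> i) \<or> (\<forall>i\<le>k. \<alpha> i)"
proof -
  define P where "P g \<longleftrightarrow> (\<forall>m\<in>{2..k}. \<forall>\<alpha>::nat \<Rightarrow> bool.
      (\<forall>r\<in>{m-g..m}. (\<Sum>i\<le>r. (-1::int) ^ i * int (r choose i) * (if \<alpha> i then 1 else 0)) = 0)
      \<longrightarrow> ((\<forall>i\<le>m. \<not> \<alpha> i) \<or> (\<forall>i\<le>m. \<alpha> i)))" for g
  have "P k"
    unfolding P_def
  proof (intro ballI allI impI, rule disjI1)
    fix m and \<alpha> :: "nat \<Rightarrow> bool"
    assume "m \<in> {2..k}"
      and "\<forall>r\<in>{m-k..m}. (\<Sum>i\<le>r. (-1) ^ i * int (r choose i) * (if \<alpha> i then 1 else 0)) = 0"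
    then have "\<forall>r\<le>m. (\<Sum>i\<le>r. (-1) ^ i * int (r choose i) * (if \<alpha> i then 1 else 0)) = 0"
      by auto
    from alternating_binomial_system_triangular[OF this]
    show "\<forall>i\<le>m. \<not> \<alpha> i"
      by (metis one_neq_zero)
  qed
  then have "P (gk k)"
    unfolding gk_def P_def[symmetric] by (rule LeastI)
  with assms show ?thesis
    unfolding P_def by auto
qed

definition seq_a :: "'a list \<Rightarrow> nat \<Rightarrow> 'a" where
  "seq_a xs i = xs ! (2 * i)"

definition seq_b :: "'a list \<Rightarrow> nat \<Rightarrow> 'a" where
  "seq_b xs i = xs ! (2 * i + 1)"

definition transversal_of :: "'a list \<Rightarrow> nat \<Rightarrow> 'a set \<Rightarrow> nat set \<Rightarrow> 'a set" where
  "transversal_of xs r C I = seq_a xs ` ({..<r} - I) \<union> seq_b xs ` I \<union> C"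

lemma bset_eq: "bset r xs = seq_b xs ` {..<r}"
  by (auto simp: bset_def seq_b_def)

context
  fixes r :: nat and V :: "'a set" and xs :: "'a list"
  assumes xs: "xs \<in> seqs r V"
begin

lemma seq_a_eq_iff: "i < r \<Longrightarrow> j < r \<Longrightarrow> seq_a xs i = seq_a xs j \<longleftrightarrow> i = j"
  using xs by (simp add: seqs_def seq_a_def nth_eq_iff_index_eq)

lemma seq_b_eq_iff: "i < r \<Longrightarrow> j < r \<Longrightarrow> seq_b xs i = seq_b xs j \<longleftrightarrow> i = j"
  using xs by (simp add: seqs_def seq_b_def nth_eq_iff_index_eq)

lemma seq_a_neq_seq_b: "i < r \<Longrightarrow> j < r \<Longrightarrow> seq_a xs i \<noteq> seq_b xs j"
  using xs by (auto simp: seqs_def seq_a_def seq_b_def nth_eq_iff_index_eq; presburger)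

lemma set_seq_eq: "set xs = seq_a xs ` {..<r} \<union> seq_b xs ` {..<r}"
proof -
  have "set xs = (!) xs ` {..<2 * r}"
    using xs by (auto simp: seqs_def in_set_conv_nth)
  also have "{..<2 * r} = (\<lambda>i. 2 * i) ` {..<r} \<union> (\<lambda>i. 2 * i + 1) ` {..<r}"
  proof (intro set_eqI iffI)
    fix j assume "j \<in> {..<2 * r}"
    then show "j \<in> (\<lambda>i. 2 * i) ` {..<r} \<union> (\<lambda>i. 2 * i + 1) ` {..<r}"
      by (cases "even j") (auto elim!: evenE oddE)
  qed auto
  finally show ?thesis
    by (simp add: image_Un image_image seq_a_def seq_b_def)
qed

lemma inj_on_seq_a: "inj_on (seq_a xs) {..<r}"
  by (auto intro: inj_onI simp: seq_a_eq_iff)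

lemma inj_on_seq_b: "inj_on (seq_b xs) {..<r}"
  by (auto intro: inj_onI simp: seq_b_eq_iff)

lemma transversals_eq:
  "transversals r k V xs = {R. R \<subseteq> V \<and> card R = k \<and> (\<forall>i<r. seq_a xs i \<in> R \<longleftrightarrow> seq_b xs i \<notin> R)}"
proof -
  have "card (R \<inter> {seq_a xs i, seq_b xs i}) = 1 \<longleftrightarrow> (seq_a xs i \<in> R \<longleftrightarrow> seq_b xs i \<notin> R)"
    if "i < r" for R i
    using seq_a_neq_seq_b[OF that that] by (auto simp: Int_insert_right)
  then show ?thesis
    by (auto simp: transversals_def seq_a_def seq_b_def)
qed

context
  fixes C :: "'a set" and I :: "nat set"
  assumes I: "I \<subseteq> {..<r}" and C: "C \<inter> set xs = {}"
begin

lemma seq_a_in_transversal_of_iff: "i < r \<Longrightarrow> seq_a xs i \<in> transversal_of xs r C I \<longleftrightarrow> i \<notin> I"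
  using I C set_seq_eq by (auto simp: transversal_of_def seq_a_eq_iff seq_a_neq_seq_b)

lemma seq_b_in_transversal_of_iff: "i < r \<Longrightarrow> seq_b xs i \<in> transversal_of xs r C I \<longleftrightarrow> i \<in> I"
  using I C set_seq_eq by (auto simp: transversal_of_def seq_b_eq_iff dest: seq_a_neq_seq_b)

lemma card_transversal_of_Int:
  assumes "finite C"
  shows "card (transversal_of xs r C I \<inter> U) =
    card {i \<in> {..<r} - I. seq_a xs i \<in> U} + card {i \<in> I. seq_b xs i \<in> U} + card (C \<inter> U)"
proof -
  let ?A = "{i \<in> {..<r} - I. seq_a xs i \<in> U}" and ?B = "{i \<in> I. seq_b xs i \<in> U}"
  have split: "transversal_of xs r C I \<inter> U = seq_a xs ` ?A \<union> seq_b xs ` ?B \<union> (C \<inter> U)"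
    by (auto simp: transversal_of_def)
  have "seq_a xs ` ?A \<inter> seq_b xs ` ?B = {}"
    using I by (auto dest: seq_a_neq_seq_b)
  moreover have "(seq_a xs ` ?A \<union> seq_b xs ` ?B) \<inter> (C \<inter> U) = {}"
    using I C set_seq_eq by auto
  moreover have "card (seq_a xs ` ?A) = card ?A" "card (seq_b xs ` ?B) = card ?B"
    using I by (auto intro!: card_image inj_on_subset[OF inj_on_seq_a] inj_on_subset[OF inj_on_seq_b])
  moreover have "finite ?A" "finite ?B"
    using I by (auto intro: finite_subset)
  ultimately show ?thesis
    unfolding split using \<open>finite C\<close> by (simp add: card_Un_disjoint)
qed

lemma card_transversal_of:
  assumes "finite C"
  shows "card (transversal_of xs r C I) = r + card C"
proof -
  have "card I \<le> r"
    using I by (metis card_lessThan card_mono finite_lessThan)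
  moreover have "card ({..<r} - I) = r - card I"
    using I by (simp add: card_Diff_subset finite_subset)
  ultimately show ?thesis
    using card_transversal_of_Int[OF assms, of UNIV] by (simp add: set_diff_eq)
qed

end

lemma bij_betw_transversal_of:
  assumes "finite V" and "r \<le> k"
  shows "bij_betw (\<lambda>(C, I). transversal_of xs r C I)
    (kset (k - r) (V - set xs) \<times> Pow {..<r}) (transversals r k V xs)"
proof -
  define \<psi> where "\<psi> R = (R - set xs, {i. i < r \<and> seq_b xs i \<in> R})" for R
  have left_inv: "\<psi> (transversal_of xs r C I) = (C, I)"
    if C: "C \<in> kset (k - r) (V - set xs)" and I: "I \<subseteq> {..<r}" for C I
  proof -
    from C have "C \<inter> set xs = {}"
      by (auto simp: kset_def)
    have "transversal_of xs r C I - set xs = C"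
      using \<open>C \<inter> set xs = {}\<close> I set_seq_eq by (auto simp: transversal_of_def)
    moreover have "{i. i < r \<and> seq_b xs i \<in> transversal_of xs r C I} = I"
      using seq_b_in_transversal_of_iff[OF I \<open>C \<inter> set xs = {}\<close>] I by auto
    ultimately show ?thesis
      by (simp add: \<psi>_def)
  qed
  have right_inv: "(\<lambda>(C, I). transversal_of xs r C I) (\<psi> R) = R" if "R \<in> transversals r k V xs" for R
    using that set_seq_eq by (fastforce simp: \<psi>_def transversals_eq transversal_of_def)
  have into: "transversal_of xs r C I \<in> transversals r k V xs"
    if "C \<in> kset (k - r) (V - set xs)" and I: "I \<subseteq> {..<r}" for C I
  proof -
    have C: "C \<inter> set xs = {}" "C \<subseteq> V" "card C = k - r" "finite C"
      using that \<open>finite V\<close> by (auto simp: kset_def intro: finite_subset)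
    moreover have "transversal_of xs r C I \<subseteq> V"
      using C(2) xs I set_seq_eq unfolding seqs_def transversal_of_def by blast
    ultimately show ?thesis
      using card_transversal_of[OF I C(1,4)] seq_a_in_transversal_of_iff[OF I C(1)]
        seq_b_in_transversal_of_iff[OF I C(1)] \<open>r \<le> k\<close>
      by (simp add: transversals_eq)
  qed
  have onto: "\<psi> R \<in> kset (k - r) (V - set xs) \<times> Pow {..<r}" if R: "R \<in> transversals r k V xs" for R
  proof -
    have "finite (R - set xs)" "(R - set xs) \<inter> set xs = {}"
      using R \<open>finite V\<close> by (auto simp: transversals_def intro: finite_subset)
    then have "card R = r + card (R - set xs)"
      using card_transversal_of[of "{i. i < r \<and> seq_b xs i \<in> R}" "R - set xs"] right_inv[OF R]
      by (auto simp: \<psi>_def)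
    then show ?thesis
      using R by (auto simp: kset_def transversals_def \<psi>_def)
  qed
  show ?thesis
  proof (rule bij_betw_byWitness[where f' = \<psi>])
    show "\<psi> ` transversals r k V xs \<subseteq> kset (k - r) (V - set xs) \<times> Pow {..<r}"
      using onto by blast
  qed (use left_inv right_inv into in auto)
qed

end

lemma transversal_sum_eq_fwd_diff_sum:
  assumes "finite V" and xs: "xs \<in> seqs r V" and "r \<le> k"
    and a_in: "\<forall>i<r. seq_a xs i \<in> U" and b_out: "\<forall>i<r. seq_b xs i \<notin> U"
  shows "(\<Sum>R\<in>transversals r k V xs. (-1) ^ card (R \<inter> bset r xs) * \<beta> (card (R \<inter> U)))
    = (\<Sum>C\<in>kset (k - r) (V - set xs). fwd_diff \<beta> r (card (C \<inter> U)))"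
proof -
  have summand: "(-1) ^ card (transversal_of xs r C I \<inter> bset r xs) * \<beta> (card (transversal_of xs r C I \<inter> U))
      = (-1) ^ card I * \<beta> (card (C \<inter> U) + r - card I)"
    if C: "C \<in> kset (k - r) (V - set xs)" and I: "I \<subseteq> {..<r}" for C I
  proof -
    have C_disj: "C \<inter> set xs = {}" and "finite C"
      using C \<open>finite V\<close> by (auto simp: kset_def intro: finite_subset)
    note card_Int = card_transversal_of_Int[OF xs I C_disj \<open>finite C\<close>]
    have "{i \<in> {..<r} - I. seq_a xs i \<in> bset r xs} = {}" "{i \<in> I. seq_b xs i \<in> bset r xs} = I"
      "C \<inter> bset r xs = {}"
      using I C_disj set_seq_eq[OF xs] seq_a_neq_seq_b[OF xs] by (auto simp: bset_eq)
    then have card_bset: "card (transversal_of xs r C I \<inter> bset r xs) = card I"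
      using card_Int by simp
    have a_part: "{i \<in> {..<r} - I. seq_a xs i \<in> U} = {..<r} - I"
      and b_part: "{i \<in> I. seq_b xs i \<in> U} = {}"
      using I a_in b_out by auto
    have "card I \<le> r"
      using I by (metis card_lessThan card_mono finite_lessThan)
    moreover have "card (transversal_of xs r C I \<inter> U) = card ({..<r} - I) + card (C \<inter> U)"
      using card_Int[of U] by (simp only: a_part b_part card.empty add_0_right)
    ultimately have "card (transversal_of xs r C I \<inter> U) = card (C \<inter> U) + r - card I"
      using I by (simp add: card_Diff_subset finite_subset)
    with card_bset show ?thesis
      by simp
  qed
  have "(\<Sum>R\<in>transversals r k V xs. (-1) ^ card (R \<inter> bset r xs) * \<beta> (card (R \<inter> U)))
      = (\<Sum>p\<in>kset (k - r) (V - set xs) \<times> Pow {..<r}.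
          (\<lambda>R. (-1) ^ card (R \<inter> bset r xs) * \<beta> (card (R \<inter> U))) ((\<lambda>(C, I). transversal_of xs r C I) p))"
    by (rule sum.reindex_bij_betw[OF bij_betw_transversal_of[OF xs \<open>finite V\<close> \<open>r \<le> k\<close>], symmetric])
  also have "\<dots> = (\<Sum>(C, I)\<in>kset (k - r) (V - set xs) \<times> Pow {..<r}.
      (-1) ^ card I * \<beta> (card (C \<inter> U) + r - card I))"
    by (rule sum.cong) (auto simp: summand)
  also have "\<dots> = (\<Sum>C\<in>kset (k - r) (V - set xs). fwd_diff \<beta> r (card (C \<inter> U)))"
    by (simp add: sum.cartesian_product fwd_diff_eq_sum_Pow)
  finally show ?thesis .
qed

lemma avg_eq_0_iff: "finite A \<Longrightarrow> avg A h = 0 \<longleftrightarrow> sum h A = 0"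
  by (cases "A = {}") (auto simp: avg_def)

lemma transversal_sum_eq_0_if_W_eq_0:
  assumes "finite V" and "W r k V f = 0" and "xs \<in> seqs r V"
  shows "(\<Sum>R\<in>transversals r k V xs. (-1) ^ card (R \<inter> bset r xs) * f R) = 0"
proof -
  let ?avg = "\<lambda>xs. avg (transversals r k V xs) (\<lambda>R. (-1) ^ card (R \<inter> bset r xs) * f R)"
  have "finite (seqs r V)"
    by (rule finite_subset[OF _ finite_lists_length_eq[OF \<open>finite V\<close>, of "2 * r"]]) (auto simp: seqs_def)
  moreover have "avg (seqs r V) (\<lambda>xs. (?avg xs)\<^sup>2) = 0"
    using assms(2) by (simp add: W_def)
  ultimately have "?avg xs = 0"
    using assms(3) by (simp add: avg_eq_0_iff sum_nonneg_eq_0_iff)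
  moreover have "finite (transversals r k V xs)"
    by (rule finite_subset[of _ "Pow V"]) (use \<open>finite V\<close> in \<open>auto simp: transversals_def\<close>)
  ultimately show ?thesis
    by (simp add: avg_eq_0_iff)
qed

lemma crossing_seq_exists:
  assumes "finite V1" and "finite V2" and "V1 \<inter> V2 = {}" and "r \<le> card V1" and "r \<le> card V2"
  obtains xs where "xs \<in> seqs r (V1 \<union> V2)" and "\<forall>i<r. seq_a xs i \<in> V1" and "\<forall>i<r. seq_b xs i \<in> V2"
proof -
  have "\<exists>ys. set ys \<subseteq> A \<and> distinct ys \<and> length ys = r" if "finite A" "r \<le> card A" for A :: "'a set"
  proof -
    obtain ys where "set ys = A" "distinct ys"
      using finite_distinct_list[OF \<open>finite A\<close>] by blast
    then show ?thesis
      using that by (intro exI[of _ "take r ys"]) (auto dest: in_set_takeD simp: distinct_card[symmetric])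
  qed
  then obtain as bs where as: "set as \<subseteq> V1" "distinct as" "length as = r"
    and bs: "set bs \<subseteq> V2" "distinct bs" "length bs = r"
    using assms by meson
  define xs where "xs = map (\<lambda>j. if even j then as ! (j div 2) else bs ! (j div 2)) [0..<2 * r]"
  have ab: "seq_a xs i = as ! i" "seq_b xs i = bs ! i" if "i < r" for i
    using that by (simp_all add: xs_def seq_a_def seq_b_def)
  have "set xs \<subseteq> set as \<union> set bs"
    using as(3) bs(3) by (auto simp: xs_def)
  moreover have "set as \<union> set bs \<subseteq> set xs"
  proof -
    have "as ! i \<in> set xs" "bs ! i \<in> set xs" if "i < r" for i
      using that ab[OF that] nth_mem[of "2 * i" xs] nth_mem[of "2 * i + 1" xs]
      by (simp_all add: seq_a_def seq_b_def xs_def)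
    then show ?thesis
      using as(3) bs(3) by (auto simp: in_set_conv_nth)
  qed
  ultimately have "set xs = set as \<union> set bs"
    by blast
  moreover have "set as \<inter> set bs = {}"
    using as(1) bs(1) assms(3) by blast
  ultimately have "card (set xs) = length xs"
    using as bs by (simp add: xs_def card_Un_disjoint distinct_card)
  then have "xs \<in> seqs r (V1 \<union> V2)"
    using \<open>set xs = set as \<union> set bs\<close> as bs by (auto simp: seqs_def xs_def card_distinct)
  moreover have "\<forall>i<r. seq_a xs i \<in> V1" "\<forall>i<r. seq_b xs i \<in> V2"
    using as bs by (auto simp: ab)
  ultimately show ?thesis
    using that by blast
qed

lemma fwd_diff_const_eq_0_if_W_eq_0:
  assumes "finite V1" and "finite V2" and "V1 \<inter> V2 = {}" and "card V1 = k" and "card V2 = k"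
    and "r \<le> k"
    and f: "\<forall>S\<in>kset k (V1 \<union> V2). f S = \<beta> (card (S \<inter> V1))"
    and W: "W r k (V1 \<union> V2) f = 0"
    and const: "\<forall>t\<le>k - r. fwd_diff \<beta> r t = c"
  shows "c = 0"
proof -
  let ?V = "V1 \<union> V2"
  obtain xs where xs: "xs \<in> seqs r ?V" and a_in: "\<forall>i<r. seq_a xs i \<in> V1" and b_in: "\<forall>i<r. seq_b xs i \<in> V2"
    using assms(4-6) by (auto intro: crossing_seq_exists[OF assms(1-3), of r])
  let ?K = "kset (k - r) (?V - set xs)"
  have "finite ?V"
    using assms(1,2) by simp
  have "0 = (\<Sum>R\<in>transversals r k ?V xs. (-1) ^ card (R \<inter> bset r xs) * f R)"
    using transversal_sum_eq_0_if_W_eq_0[OF \<open>finite ?V\<close> W xs] by simp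
  also have "\<dots> = (\<Sum>R\<in>transversals r k ?V xs. (-1) ^ card (R \<inter> bset r xs) * \<beta> (card (R \<inter> V1)))"
    using f by (intro sum.cong) (auto simp: transversals_def kset_def)
  also have "\<dots> = (\<Sum>C\<in>?K. fwd_diff \<beta> r (card (C \<inter> V1)))"
  proof (rule transversal_sum_eq_fwd_diff_sum[OF \<open>finite ?V\<close> xs \<open>r \<le> k\<close> a_in])
    show "\<forall>i<r. seq_b xs i \<notin> V1"
      using b_in assms(3) by blast
  qed
  also have "\<dots> = (\<Sum>C\<in>?K. c)"
  proof (rule sum.cong)
    fix C assume "C \<in> ?K"
    then have "C \<subseteq> ?V" "card C = k - r"
      by (auto simp: kset_def)
    then have "card (C \<inter> V1) \<le> k - r"
      using \<open>finite ?V\<close> by (metis card_mono finite_subset inf_le1)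
    then show "fwd_diff \<beta> r (card (C \<inter> V1)) = c"
      using const by blast
  qed simp
  finally have "real (card ?K) * c = 0"
    by simp
  moreover have "card ?K \<noteq> 0"
  proof -
    have "card (set xs) = 2 * r" "set xs \<subseteq> ?V"
      using xs by (simp_all add: seqs_def distinct_card)
    moreover have "card ?V = 2 * k"
      using assms(1-5) by (simp add: card_Un_disjoint)
    ultimately have "k - r \<le> card (?V - set xs)"
      by (simp add: card_Diff_subset finite_subset)
    then obtain C where "C \<subseteq> ?V - set xs" "card C = k - r"
      by (meson obtain_subset_with_card_n)
    then have "?K \<noteq> {}"
      by (auto simp: kset_def)
    moreover have "finite ?K"
      using \<open>finite ?V\<close> by (auto simp: kset_def intro: finite_subset[of _ "Pow ?V"])
    ultimately show ?thesis
      by simp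
  qed
  ultimately show ?thesis
    by simp
qed

lemma fwd_diff_at_0_eq_0_if_W_eq_0:
  assumes "finite V1" and "finite V2" and "V1 \<inter> V2 = {}" and "card V1 = k" and "card V2 = k"
    and "r \<le> k"
    and f: "\<forall>S\<in>kset k (V1 \<union> V2). f S = \<beta> (card (S \<inter> V1))"
    and W: "\<forall>n. r \<le> n \<and> n \<le> k \<longrightarrow> W n k (V1 \<union> V2) f = 0"
  shows "fwd_diff \<beta> r 0 = 0"
proof -
  have "\<forall>t\<le>k - r. fwd_diff \<beta> r t = 0"
  proof (rule fwd_diff_vanishing_downward[OF \<open>r \<le> k\<close>])
    fix n assume "r \<le> n" "n \<le> k" and const: "\<forall>t\<le>k - n. fwd_diff \<beta> n t = fwd_diff \<beta> n 0"
    with W have "W n k (V1 \<union> V2) f = 0"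
      by blast
    from fwd_diff_const_eq_0_if_W_eq_0[OF assms(1-5) \<open>n \<le> k\<close> f this const]
    show "fwd_diff \<beta> n 0 = 0" .
  qed
  then show ?thesis
    by simp
qed

lemma is_pattern_edge_iff:
  assumes "is_pattern k V1 V2 E"
  obtains \<alpha> where "\<forall>S\<in>kset k (V1 \<union> V2). S \<in> E \<longleftrightarrow> \<alpha> (card (S \<inter> V1))"
proof
  have card_V2: "card (S \<inter> V2) = k - card (S \<inter> V1)" if "S \<in> kset k (V1 \<union> V2)" for S
  proof -
    have "finite V1" "finite V2" "V1 \<inter> V2 = {}"
      using assms by (simp_all add: is_pattern_def)
    moreover have "S = (S \<inter> V1) \<union> (S \<inter> V2)" "card S = k"
      using that by (auto simp: kset_def)
    ultimately show ?thesis
      by (metis card_Un_disjoint diff_add_inverse finite_Int inf_commute inf_assoc inf_bot_right)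
  qed
  show "\<forall>S\<in>kset k (V1 \<union> V2). S \<in> E \<longleftrightarrow> (\<exists>T\<in>E. card (T \<inter> V1) = card (S \<inter> V1))"
  proof (intro ballI iffI)
    fix S assume S: "S \<in> kset k (V1 \<union> V2)" and "\<exists>T\<in>E. card (T \<inter> V1) = card (S \<inter> V1)"
    then obtain T where T: "T \<in> E" "card (T \<inter> V1) = card (S \<inter> V1)"
      by blast
    moreover have "T \<in> kset k (V1 \<union> V2)"
      using T assms by (auto simp: is_pattern_def)
    ultimately show "S \<in> E"
      using S assms card_V2 unfolding is_pattern_def by metis
  qed blast
qed

lemma homogeneous_if_edge_iff_const:
  assumes "finite V" and "E \<subseteq> kset k V"
    and edge_iff: "\<forall>S\<in>kset k V. S \<in> E \<longleftrightarrow> \<alpha> (card (S \<inter> U))"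
    and "(\<forall>i\<le>k. \<not> \<alpha> i) \<or> (\<forall>i\<le>k. \<alpha> i)"
  shows "homogeneous k V E"
proof -
  have bound: "card (S \<inter> U) \<le> k" if "S \<in> kset k V" for S
  proof -
    from that have "S \<subseteq> V" "card S = k"
      by (auto simp: kset_def)
    then show ?thesis
      using \<open>finite V\<close> by (metis card_mono finite_subset inf_le1)
  qed
  from assms(4) have "E = {} \<or> E = kset k V"
    using assms(2) edge_iff bound by blast
  then show ?thesis
    by (simp add: homogeneous_def)
qed

theorem lemma4p4:
  fixes k :: nat and V1 V2 :: "'a set" and E :: "'a set set"
  assumes "k \<ge> 2"
    and "is_pattern k V1 V2 E"
    and "\<forall>r. k - gk k \<le> r \<and> r \<le> k \<longrightarrow> W r k (V1 \<union> V2) (indic E) = 0"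
  shows "homogeneous k (V1 \<union> V2) E"
proof -
  have pattern: "finite V1" "finite V2" "V1 \<inter> V2 = {}" "card V1 = k" "card V2 = k"
    "E \<subseteq> kset k (V1 \<union> V2)"
    using assms(2) unfolding is_pattern_def by blast+
  obtain \<alpha> where edge_iff: "\<forall>S\<in>kset k (V1 \<union> V2). S \<in> E \<longleftrightarrow> \<alpha> (card (S \<inter> V1))"
    using is_pattern_edge_iff[OF assms(2)] .
  define \<beta> where "\<beta> i = (if \<alpha> i then 1 else 0 :: real)" for i
  have indic: "\<forall>S\<in>kset k (V1 \<union> V2). indic E S = \<beta> (card (S \<inter> V1))"
    using edge_iff by (simp add: indic_def \<beta>_def)
  have "(\<Sum>i\<le>r. (-1::int) ^ i * int (r choose i) * (if \<alpha> i then 1 else 0)) = 0"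
    if "r \<in> {k - gk k..k}" for r
  proof -
    have "fwd_diff \<beta> r 0 = 0"
      using that assms(3) by (intro fwd_diff_at_0_eq_0_if_W_eq_0[OF pattern(1-5) _ indic]) auto
    then have "real_of_int (\<Sum>i\<le>r. (-1) ^ i * int (r choose i) * (if \<alpha> i then 1 else 0)) = 0"
      by (simp add: fwd_diff_at_0 \<beta>_def if_distrib cong: if_cong)
    then show ?thesis
      by (simp only: of_int_eq_0_iff)
  qed
  then have "(\<forall>i\<le>k. \<not> \<alpha> i) \<or> (\<forall>i\<le>k. \<alpha> i)"
    by (intro gk_spec[OF assms(1)] ballI)
  moreover have "finite (V1 \<union> V2)"
    using pattern(1,2) by simp
  ultimately show ?thesis
    using homogeneous_if_edge_iff_const[OF _ pattern(6) edge_iff] by blast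
qed

end
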